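(* Each of the following five $8$-dimensional complex Lie algebras is indecomposable (not a direct sum of two nonzero ideals). Each has basis $\mathbf x_1,\dots,\mathbf x_6,\mathbf y_1,\mathbf y_2$, with the listed nonzero brackets (together with those obtained by antisymmetry) and all other brackets of basis elements equal to zero: (1) $N^{8,2}_1$: $[\mathbf x_1,\mathbf x_2]=\mathbf y_1$, $[\mathbf x_3,\mathbf x_4]=\mathbf y_2$, $[\mathbf x_5,\mathbf x_6]=\mathbf y_1+\mathbf y_2$; (2) $N^{8,2}_2$: $[\mathbf x_5,\mathbf x_2]=[\mathbf x_6,\mathbf x_1]=\mathbf y_1$, $[\mathbf x_5,\mathbf x_3]=[\mathbf x_6,\mathbf x_4]=\mathbf y_2$; (3) $N^{8,2}_3$: $[\mathbf x_1,\mathbf x_2]=[\mathbf x_6,\mathbf x_5]=\mathbf y_1$, $[\mathbf x_3,\mathbf x_6]=[\mathbf x_5,\mathbf x_4]=\mathbf y_2$; (4) $N^{8,2}_4$: $[\mathbf x_1,\mathbf x_2]=[\mathbf x_3,\mathbf x_6]=[\mathbf x_5,\mathbf x_4]=\mathbf y_1$, $[\mathbf x_6,\mathbf x_5]=\mathbf y_2$; (5) $N^{8,2}_5$: $[\mathbf x_1,\mathbf x_6]=[\mathbf x_3,\mathbf x_4]=[\mathbf x_5,\mathbf x_2]=\mathbf y_1$, $[\mathbf x_6,\mathbf x_3]=[\mathbf x_4,\mathbf x_5]=\mathbf y_2$. *)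

theory Defs
  imports Complex_Main
begin

datatype basis = X1 | X2 | X3 | X4 | X5 | X6 | Y1 | Y2

type_synonym vec = "basis \<Rightarrow> complex"

definition e :: "basis \<Rightarrow> vec" where
  "e a = (\<lambda>k. if k = a then 1 else 0)"

definition vadd :: "vec \<Rightarrow> vec \<Rightarrow> vec" where
  "vadd u v = (\<lambda>k. u k + v k)"

definition vscale :: "complex \<Rightarrow> vec \<Rightarrow> vec" where
  "vscale c u = (\<lambda>k. c * u k)"

definition vzero :: vec where
  "vzero = (\<lambda>_. 0)"

text \<open>Structure constants: sc a b is the bracket of basis vectors a and b.
 The bracket is its bilinear extension.\<close>
type_synonym struct = "basis \<Rightarrow> basis \<Rightarrow> vec"

definition bracket :: "struct \<Rightarrow> vec \<Rightarrow> vec \<Rightarrow> vec" where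
  "bracket sc u v = (\<lambda>k. \<Sum>a\<in>UNIV. \<Sum>b\<in>UNIV. u a * v b * sc a b k)"

definition from_rels :: "(basis \<times> basis \<times> vec) list \<Rightarrow> struct" where
  "from_rels rs a b = (\<lambda>k. (\<Sum>(p,q,v)\<leftarrow>rs.
      (if p = a \<and> q = b then v k else 0) - (if p = b \<and> q = a then v k else 0)))"

definition is_lie_algebra :: "struct \<Rightarrow> bool" where
  "is_lie_algebra sc \<longleftrightarrow>
     (\<forall>u. bracket sc u u = vzero) \<and>
     (\<forall>u v w. vadd (vadd (bracket sc u (bracket sc v w)) (bracket sc v (bracket sc w u)))
                     (bracket sc w (bracket sc u v)) = vzero)"

definition csubspace :: "vec set \<Rightarrow> bool" where
  "csubspace S \<longleftrightarrow> vzero \<in> S \<and> (\<forall>x\<in>S. \<forall>y\<in>S. vadd x y \<in> S) \<and>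
     (\<forall>c. \<forall>x\<in>S. vscale c x \<in> S)"

definition lie_ideal :: "struct \<Rightarrow> vec set \<Rightarrow> bool" where
  "lie_ideal sc I \<longleftrightarrow> csubspace I \<and> (\<forall>x. \<forall>i\<in>I. bracket sc x i \<in> I)"

definition decomposable :: "struct \<Rightarrow> bool" where
  "decomposable sc \<longleftrightarrow> (\<exists>I J. lie_ideal sc I \<and> lie_ideal sc J \<and>
     I \<noteq> {vzero} \<and> J \<noteq> {vzero} \<and> I \<inter> J = {vzero} \<and>
     (\<forall>v. \<exists>i\<in>I. \<exists>j\<in>J. v = vadd i j))"

definition indecomposable :: "struct \<Rightarrow> bool" where
  "indecomposable sc \<longleftrightarrow> \<not> decomposable sc"

definition N1 :: struct where
  "N1 = from_rels [(X1, X2, e Y1), (X3, X4, e Y2), (X5, X6, vadd (e Y1) (e Y2))]"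

definition N2 :: struct where
  "N2 = from_rels [(X5, X2, e Y1), (X6, X1, e Y1), (X5, X3, e Y2), (X6, X4, e Y2)]"

definition N3 :: struct where
  "N3 = from_rels [(X1, X2, e Y1), (X6, X5, e Y1), (X3, X6, e Y2), (X5, X4, e Y2)]"

definition N4 :: struct where
  "N4 = from_rels [(X1, X2, e Y1), (X3, X6, e Y1), (X5, X4, e Y1), (X6, X5, e Y2)]"

definition N5 :: struct where
  "N5 = from_rels [(X1, X6, e Y1), (X3, X4, e Y1), (X5, X2, e Y1),
                   (X6, X3, e Y2), (X4, X5, e Y2)]"

end

theory Submission
  imports Defs
begin

text \<open>All five algebras are two-step nilpotent: every bracket lies in the span of
  \<open>y\<^sub>1, y\<^sub>2\<close>, which is central, so the Jacobi identity holds trivially, and one checks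
  that the centre is exactly this span. If \<open>L = I \<oplus> J\<close> with \<open>y\<^sub>1, y\<^sub>2 \<in> I\<close>, then
  \<open>[L, J] \<subseteq> I \<inter> J = 0\<close>, so \<open>J\<close> is central, hence contained in \<open>I\<close> and zero.
  It therefore suffices to show that one summand of any decomposition contains both
  \<open>y\<^sub>1\<close> and \<open>y\<^sub>2\<close>. For \<open>N\<^sub>2, \<dots>, N\<^sub>5\<close> this is the summand in which \<open>x\<^sub>5\<close> has a
  nonzero component: bracketing such an element with suitable basis vectors produces
  \<open>y\<^sub>1\<close> and \<open>y\<^sub>2\<close>. For \<open>N\<^sub>1\<close> the components of \<open>x\<^sub>1, x\<^sub>3, x\<^sub>5\<close> put \<open>y\<^sub>1\<close>, \<open>y\<^sub>2\<close> and
  \<open>y\<^sub>1 + y\<^sub>2\<close> into the summands, and two of these three land in the same one.\<close>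

definition in_span_y :: "vec \<Rightarrow> bool" where
  "in_span_y v \<longleftrightarrow> (\<forall>k. k \<noteq> Y1 \<longrightarrow> k \<noteq> Y2 \<longrightarrow> v k = 0)"

lemma UNIV_basis: "(UNIV :: basis set) = {X1, X2, X3, X4, X5, X6, Y1, Y2}"
  by (auto intro: basis.exhaust)

lemma all_basis: "(\<forall>k. P k) \<longleftrightarrow> P X1 \<and> P X2 \<and> P X3 \<and> P X4 \<and> P X5 \<and> P X6 \<and> P Y1 \<and> P Y2"
  by (metis basis.exhaust)

lemma vadd_commute: "vadd u v = vadd v u"
  by (simp add: vadd_def fun_eq_iff add.commute)

lemma in_span_y_e: "a \<in> {Y1, Y2} \<Longrightarrow> in_span_y (e a)"
  by (auto simp: in_span_y_def e_def)

lemma in_span_y_vadd: "in_span_y u \<Longrightarrow> in_span_y v \<Longrightarrow> in_span_y (vadd u v)"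
  by (simp add: in_span_y_def vadd_def)

definition two_step_rels :: "(basis \<times> basis \<times> vec) list \<Rightarrow> bool" where
  "two_step_rels rs \<longleftrightarrow>
     (\<forall>(p, q, v)\<in>set rs. p \<notin> {Y1, Y2} \<and> q \<notin> {Y1, Y2} \<and> in_span_y v)"

lemma from_rels_Nil: "from_rels [] a b k = 0"
  by (simp add: from_rels_def)

lemma from_rels_Cons:
  "from_rels ((p, q, v) # rs) a b k =
     (if p = a \<and> q = b then v k else 0) - (if p = b \<and> q = a then v k else 0) + from_rels rs a b k"
  by (simp add: from_rels_def)

text \<open>Unrestricted simp loops on the hypotheses \<open>p = a, q = b, p = b, q = a\<close>
  that case splitting on both conditionals produces; hence the controlled rewriting below.\<close>

lemma from_rels_Cons_vanishing:
  "v k = 0 \<Longrightarrow> from_rels ((p, q, v) # rs) a b k = from_rels rs a b k"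
  by (simp only: from_rels_Cons if_cancel cong: if_cong) simp

lemma from_rels_Cons_unrelated:
  assumes "\<not> (p = a \<and> q = b)" and "\<not> (p = b \<and> q = a)"
  shows "from_rels ((p, q, v) # rs) a b k = from_rels rs a b k"
  by (simp only: from_rels_Cons assms if_False) simp

lemma from_rels_swap: "from_rels rs b a k = - from_rels rs a b k"
  by (induction rs) (auto simp: from_rels_def)

lemma from_rels_in_span_y:
  assumes "two_step_rels rs" shows "in_span_y (from_rels rs a b)"
  using assms
proof (induction rs)
  case Nil
  then show ?case by (simp add: in_span_y_def from_rels_Nil)
next
  case (Cons r rs)
  obtain p q v where r: "r = (p, q, v)" by (cases r)
  have v: "in_span_y v" and rs: "two_step_rels rs"
    using Cons.prems by (simp_all add: r two_step_rels_def)
  show ?case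
    using Cons.IH[OF rs] v by (simp add: r from_rels_Cons_vanishing in_span_y_def)
qed

lemma from_rels_y_right:
  assumes "two_step_rels rs" and b: "b \<in> {Y1, Y2}" shows "from_rels rs a b = vzero"
  using assms(1)
proof (induction rs)
  case Nil
  then show ?case by (simp add: vzero_def fun_eq_iff from_rels_Nil)
next
  case (Cons r rs)
  obtain p q v where r: "r = (p, q, v)" by (cases r)
  have "p \<notin> {Y1, Y2}" "q \<notin> {Y1, Y2}" and rs: "two_step_rels rs"
    using Cons.prems by (simp_all add: r two_step_rels_def)
  then have "p \<noteq> b" "q \<noteq> b" using b by auto
  then show ?case
    using Cons.IH[OF rs] by (simp add: r fun_eq_iff from_rels_Cons_unrelated)
qed

lemma bracket_self_eq_vzero:
  assumes antisym: "\<And>a b k. sc b a k = - sc a b k"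
  shows "bracket sc u u = vzero"
proof
  fix k
  let ?S = "\<Sum>a\<in>UNIV. \<Sum>b\<in>UNIV. u a * u b * sc a b k"
  have swap: "u a * u b * sc a b k = - (u b * u a * sc b a k)" for a b
    using antisym[of a b] by simp
  have "?S = (\<Sum>b\<in>UNIV. \<Sum>a\<in>UNIV. u a * u b * sc a b k)"
    by (rule sum.swap)
  also have "\<dots> = (\<Sum>b\<in>UNIV. \<Sum>a\<in>UNIV. - (u b * u a * sc b a k))"
    by (intro sum.cong refl swap)
  also have "\<dots> = - ?S"
    by (simp add: sum_negf)
  finally show "bracket sc u u k = vzero k"
    by (simp add: bracket_def vzero_def)
qed

lemma bracket_in_span_y:
  assumes "\<And>a b. in_span_y (sc a b)" shows "in_span_y (bracket sc u v)"
  using assms by (simp add: in_span_y_def bracket_def)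

lemma bracket_span_y_right:
  assumes "\<And>a b. b \<in> {Y1, Y2} \<Longrightarrow> sc a b = vzero" and "in_span_y v"
  shows "bracket sc u v = vzero"
proof -
  have zero: "u a * v b * sc a b k = 0" for a b k
    using assms by (cases "b \<in> {Y1, Y2}") (auto simp: in_span_y_def vzero_def)
  show ?thesis by (simp add: bracket_def vzero_def zero)
qed

lemma is_lie_algebra_two_step:
  assumes antisym: "\<And>a b k. sc b a k = - sc a b k"
    and y_valued: "\<And>a b. in_span_y (sc a b)"
    and y_right: "\<And>a b. b \<in> {Y1, Y2} \<Longrightarrow> sc a b = vzero"
  shows "is_lie_algebra sc"
proof -
  have "bracket sc u (bracket sc v w) = vzero" for u v w
    using y_right bracket_in_span_y[OF y_valued] by (rule bracket_span_y_right)
  then show ?thesis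
    by (simp add: is_lie_algebra_def bracket_self_eq_vzero[OF antisym] vadd_def vzero_def)
qed

lemma is_lie_algebra_from_rels: "two_step_rels rs \<Longrightarrow> is_lie_algebra (from_rels rs)"
  by (rule is_lie_algebra_two_step, rule from_rels_swap)
    (simp_all add: from_rels_in_span_y from_rels_y_right)

lemma csubspace_vadd: "csubspace K \<Longrightarrow> u \<in> K \<Longrightarrow> v \<in> K \<Longrightarrow> vadd u v \<in> K"
  by (simp add: csubspace_def)

lemma csubspace_vscale: "csubspace K \<Longrightarrow> v \<in> K \<Longrightarrow> vscale c v \<in> K"
  by (simp add: csubspace_def)

lemma csubspace_vscale_cancel:
  assumes "csubspace K" and "vscale c v \<in> K" and "c \<noteq> 0" shows "v \<in> K"
proof -
  have "vscale (1 / c) (vscale c v) = v"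
    using \<open>c \<noteq> 0\<close> by (simp add: vscale_def)
  with csubspace_vscale[OF assms(1,2)] show ?thesis by metis
qed

lemma csubspace_vadd_cancel:
  assumes "csubspace K" and "vadd u v \<in> K" and "u \<in> K" shows "v \<in> K"
proof -
  have "vadd (vadd u v) (vscale (- 1) u) = v"
    by (simp add: vadd_def vscale_def)
  with assms show ?thesis by (metis csubspace_vadd csubspace_vscale)
qed

lemma csubspace_span_y:
  assumes "csubspace K" and "e Y1 \<in> K" and "e Y2 \<in> K" and "in_span_y v" shows "v \<in> K"
proof -
  have "v = vadd (vscale (v Y1) (e Y1)) (vscale (v Y2) (e Y2))"
    using \<open>in_span_y v\<close> by (auto simp: in_span_y_def vadd_def vscale_def e_def)
  with assms(1-3) show ?thesis by (metis csubspace_vadd csubspace_vscale)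
qed

lemma lie_ideal_complement_trivial:
  assumes y_valued: "\<And>u v. in_span_y (bracket sc u v)"
    and center: "\<And>z. (\<And>m. bracket sc (e m) z = vzero) \<Longrightarrow> in_span_y z"
    and I: "lie_ideal sc I" and J: "lie_ideal sc J" and disjoint: "I \<inter> J = {vzero}"
    and y1: "e Y1 \<in> I" and y2: "e Y2 \<in> I"
  shows "J = {vzero}"
proof -
  have span_y_in_I: "in_span_y v \<Longrightarrow> v \<in> I" for v
    using I y1 y2 by (simp add: lie_ideal_def csubspace_span_y)
  have "j = vzero" if "j \<in> J" for j
  proof -
    have "bracket sc (e m) j \<in> I \<inter> J" for m
      using J \<open>j \<in> J\<close> span_y_in_I[OF y_valued] by (simp add: lie_ideal_def)
    then have "in_span_y j"
      using disjoint by (intro center) blast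
    then show ?thesis
      using span_y_in_I \<open>j \<in> J\<close> disjoint by blast
  qed
  moreover have "vzero \<in> J"
    using J by (simp add: lie_ideal_def csubspace_def)
  ultimately show ?thesis by blast
qed

lemma indecomposable_if_summand_contains_y:
  assumes y_valued: "\<And>u v. in_span_y (bracket sc u v)"
    and center: "\<And>z. (\<And>m. bracket sc (e m) z = vzero) \<Longrightarrow> in_span_y z"
    and summand_contains_y: "\<And>I J. lie_ideal sc I \<Longrightarrow> lie_ideal sc J \<Longrightarrow>
          \<forall>v. \<exists>i\<in>I. \<exists>j\<in>J. v = vadd i j \<Longrightarrow>
          e Y1 \<in> I \<and> e Y2 \<in> I \<or> e Y1 \<in> J \<and> e Y2 \<in> J"
  shows "indecomposable sc"
  unfolding indecomposable_def decomposable_def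
proof clarify
  fix I J
  assume I: "lie_ideal sc I" and J: "lie_ideal sc J"
    and "I \<noteq> {vzero}" "J \<noteq> {vzero}" "I \<inter> J = {vzero}"
    and "\<forall>v. \<exists>i\<in>I. \<exists>j\<in>J. v = vadd i j"
  with summand_contains_y[OF I J]
    lie_ideal_complement_trivial[OF y_valued center I J]
    lie_ideal_complement_trivial[OF y_valued center J I]
  show False by (metis inf_commute)
qed

lemma decomposition_coordinate_nonzero:
  assumes "\<forall>v. \<exists>i\<in>I. \<exists>j\<in>J. v = vadd i j"
  shows "(\<exists>w\<in>I. w m \<noteq> 0) \<or> (\<exists>w\<in>J. w m \<noteq> 0)"
proof -
  obtain i j where ij: "i \<in> I" "j \<in> J" and "e m = vadd i j"
    using assms by blast
  then have "i m + j m = 1"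
    by (metis e_def vadd_def)
  then have "i m \<noteq> 0 \<or> j m \<noteq> 0"
    by auto
  with ij show ?thesis by blast
qed

lemma indecomposable_if_coordinate_forces_y:
  assumes y_valued: "\<And>u v. in_span_y (bracket sc u v)"
    and center: "\<And>z. (\<And>m. bracket sc (e m) z = vzero) \<Longrightarrow> in_span_y z"
    and forces_y: "\<And>K w. lie_ideal sc K \<Longrightarrow> w \<in> K \<Longrightarrow> w m \<noteq> 0 \<Longrightarrow> e Y1 \<in> K \<and> e Y2 \<in> K"
  shows "indecomposable sc"
  using y_valued center
proof (rule indecomposable_if_summand_contains_y)
  fix I J
  assume "lie_ideal sc I" "lie_ideal sc J" "\<forall>v. \<exists>i\<in>I. \<exists>j\<in>J. v = vadd i j"
  then show "e Y1 \<in> I \<and> e Y2 \<in> I \<or> e Y1 \<in> J \<and> e Y2 \<in> J"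
    using decomposition_coordinate_nonzero[of I J m] forces_y by blast
qed

lemma from_rels_two_step_N:
  "sc \<in> {N1, N2, N3, N4, N5} \<Longrightarrow> \<exists>rs. sc = from_rels rs \<and> two_step_rels rs"
  unfolding N1_def N2_def N3_def N4_def N5_def
  by (elim insertE emptyE; simp only:; rule exI, rule conjI, rule refl)
    (simp_all add: two_step_rels_def in_span_y_e in_span_y_vadd)

lemma is_lie_algebra_N:
  assumes "sc \<in> {N1, N2, N3, N4, N5}" shows "is_lie_algebra sc"
  using from_rels_two_step_N[OF assms] is_lie_algebra_from_rels by metis

definition minor :: "basis \<Rightarrow> basis \<Rightarrow> vec \<Rightarrow> vec \<Rightarrow> complex" where
  "minor p q u v = u p * v q - u q * v p"

lemmas bracket_N_simps = bracket_def from_rels_def UNIV_basis e_def vadd_def minor_def algebra_simps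

lemma bracket_N1: "bracket N1 u v = (\<lambda>k. case k of
    Y1 \<Rightarrow> minor X1 X2 u v + minor X5 X6 u v
  | Y2 \<Rightarrow> minor X3 X4 u v + minor X5 X6 u v
  | _ \<Rightarrow> 0)"
  by (simp add: fun_eq_iff all_basis N1_def bracket_N_simps)

lemma bracket_N2: "bracket N2 u v = (\<lambda>k. case k of
    Y1 \<Rightarrow> minor X5 X2 u v + minor X6 X1 u v
  | Y2 \<Rightarrow> minor X5 X3 u v + minor X6 X4 u v
  | _ \<Rightarrow> 0)"
  by (simp add: fun_eq_iff all_basis N2_def bracket_N_simps)

lemma bracket_N3: "bracket N3 u v = (\<lambda>k. case k of
    Y1 \<Rightarrow> minor X1 X2 u v + minor X6 X5 u v
  | Y2 \<Rightarrow> minor X3 X6 u v + minor X5 X4 u v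
  | _ \<Rightarrow> 0)"
  by (simp add: fun_eq_iff all_basis N3_def bracket_N_simps)

lemma bracket_N4: "bracket N4 u v = (\<lambda>k. case k of
    Y1 \<Rightarrow> minor X1 X2 u v + minor X3 X6 u v + minor X5 X4 u v
  | Y2 \<Rightarrow> minor X6 X5 u v
  | _ \<Rightarrow> 0)"
  by (simp add: fun_eq_iff all_basis N4_def bracket_N_simps)

lemma bracket_N5: "bracket N5 u v = (\<lambda>k. case k of
    Y1 \<Rightarrow> minor X1 X6 u v + minor X3 X4 u v + minor X5 X2 u v
  | Y2 \<Rightarrow> minor X6 X3 u v + minor X4 X5 u v
  | _ \<Rightarrow> 0)"
  by (simp add: fun_eq_iff all_basis N5_def bracket_N_simps)

lemma bracket_in_span_y_N:
  assumes "sc \<in> {N1, N2, N3, N4, N5}" shows "in_span_y (bracket sc u v)"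
  using from_rels_two_step_N[OF assms] from_rels_in_span_y bracket_in_span_y by metis

lemma center_N:
  assumes "sc \<in> {N1, N2, N3, N4, N5}" and "\<And>m. bracket sc (e m) z = vzero"
  shows "in_span_y z"
proof -
  have "\<forall>m\<in>{X1, X2, X3, X4, X5, X6}. \<forall>k\<in>{Y1, Y2}. bracket sc (e m) z k = 0"
    using assms(2) by (simp add: vzero_def)
  with assms(1) show ?thesis
    by (elim insertE emptyE)
      (simp_all add: bracket_N1 bracket_N2 bracket_N3 bracket_N4 bracket_N5
        minor_def e_def in_span_y_def all_basis)
qed

lemmas bracket_e_simps = fun_eq_iff all_basis minor_def e_def vadd_def vscale_def

lemma lie_ideal_N1_contains:
  assumes "lie_ideal N1 K" and "w \<in> K"
  shows "w X1 \<noteq> 0 \<Longrightarrow> e Y1 \<in> K"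
    and "w X3 \<noteq> 0 \<Longrightarrow> e Y2 \<in> K"
    and "w X5 \<noteq> 0 \<Longrightarrow> vadd (e Y1) (e Y2) \<in> K"
proof -
  have K: "csubspace K" and br: "bracket N1 (e m) w \<in> K" for m
    using assms by (simp_all add: lie_ideal_def)
  have "bracket N1 (e X2) w = vscale (- w X1) (e Y1)"
    by (simp add: bracket_N1 bracket_e_simps)
  then show "w X1 \<noteq> 0 \<Longrightarrow> e Y1 \<in> K"
    using csubspace_vscale_cancel[OF K] br[of X2] by simp
  have "bracket N1 (e X4) w = vscale (- w X3) (e Y2)"
    by (simp add: bracket_N1 bracket_e_simps)
  then show "w X3 \<noteq> 0 \<Longrightarrow> e Y2 \<in> K"
    using csubspace_vscale_cancel[OF K] br[of X4] by simp
  have "bracket N1 (e X6) w = vscale (- w X5) (vadd (e Y1) (e Y2))"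
    by (simp add: bracket_N1 bracket_e_simps)
  then show "w X5 \<noteq> 0 \<Longrightarrow> vadd (e Y1) (e Y2) \<in> K"
    using csubspace_vscale_cancel[OF K] br[of X6] by simp
qed

lemma lie_ideal_N2_contains_y:
  assumes "lie_ideal N2 K" and "w \<in> K" and "w X5 \<noteq> 0"
  shows "e Y1 \<in> K \<and> e Y2 \<in> K"
proof -
  have K: "csubspace K" and br: "bracket N2 (e m) w \<in> K" for m
    using assms(1,2) by (simp_all add: lie_ideal_def)
  have "bracket N2 (e X2) w = vscale (- w X5) (e Y1)"
    by (simp add: bracket_N2 bracket_e_simps)
  then have y1: "e Y1 \<in> K"
    using csubspace_vscale_cancel[OF K] br[of X2] \<open>w X5 \<noteq> 0\<close> by simp
  have "bracket N2 (e X3) w = vscale (- w X5) (e Y2)"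
    by (simp add: bracket_N2 bracket_e_simps)
  then have "e Y2 \<in> K"
    using csubspace_vscale_cancel[OF K] br[of X3] \<open>w X5 \<noteq> 0\<close> by simp
  with y1 show ?thesis ..
qed

lemma lie_ideal_N3_contains_y:
  assumes "lie_ideal N3 K" and "w \<in> K" and "w X5 \<noteq> 0"
  shows "e Y1 \<in> K \<and> e Y2 \<in> K"
proof -
  have K: "csubspace K" and br: "bracket N3 (e m) w \<in> K" for m
    using assms(1,2) by (simp_all add: lie_ideal_def)
  have "bracket N3 (e X4) w = vscale (- w X5) (e Y2)"
    by (simp add: bracket_N3 bracket_e_simps)
  then have y2: "e Y2 \<in> K"
    using csubspace_vscale_cancel[OF K] br[of X4] \<open>w X5 \<noteq> 0\<close> by simp
  have "vadd (bracket N3 (e X6) w) (vscale (w X3) (e Y2)) = vscale (w X5) (e Y1)"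
    by (simp add: bracket_N3 bracket_e_simps)
  moreover have "vadd (bracket N3 (e X6) w) (vscale (w X3) (e Y2)) \<in> K"
    using K br y2 by (simp add: csubspace_vadd csubspace_vscale)
  ultimately have "e Y1 \<in> K"
    using csubspace_vscale_cancel[OF K] \<open>w X5 \<noteq> 0\<close> by metis
  with y2 show ?thesis by blast
qed

lemma lie_ideal_N4_contains_y:
  assumes "lie_ideal N4 K" and "w \<in> K" and "w X5 \<noteq> 0"
  shows "e Y1 \<in> K \<and> e Y2 \<in> K"
proof -
  have K: "csubspace K" and br: "bracket N4 (e m) w \<in> K" for m
    using assms(1,2) by (simp_all add: lie_ideal_def)
  have "bracket N4 (e X4) w = vscale (- w X5) (e Y1)"
    by (simp add: bracket_N4 bracket_e_simps)
  then have y1: "e Y1 \<in> K"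
    using csubspace_vscale_cancel[OF K] br[of X4] \<open>w X5 \<noteq> 0\<close> by simp
  have "vadd (bracket N4 (e X6) w) (vscale (w X3) (e Y1)) = vscale (w X5) (e Y2)"
    by (simp add: bracket_N4 bracket_e_simps)
  moreover have "vadd (bracket N4 (e X6) w) (vscale (w X3) (e Y1)) \<in> K"
    using K br y1 by (simp add: csubspace_vadd csubspace_vscale)
  ultimately have "e Y2 \<in> K"
    using csubspace_vscale_cancel[OF K] \<open>w X5 \<noteq> 0\<close> by metis
  with y1 show ?thesis ..
qed

lemma lie_ideal_N5_contains_y:
  assumes "lie_ideal N5 K" and "w \<in> K" and "w X5 \<noteq> 0"
  shows "e Y1 \<in> K \<and> e Y2 \<in> K"
proof -
  have K: "csubspace K" and br: "bracket N5 (e m) w \<in> K" for m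
    using assms(1,2) by (simp_all add: lie_ideal_def)
  have "bracket N5 (e X2) w = vscale (- w X5) (e Y1)"
    by (simp add: bracket_N5 bracket_e_simps)
  then have y1: "e Y1 \<in> K"
    using csubspace_vscale_cancel[OF K] br[of X2] \<open>w X5 \<noteq> 0\<close> by simp
  have "vadd (bracket N5 (e X4) w) (vscale (w X3) (e Y1)) = vscale (w X5) (e Y2)"
    by (simp add: bracket_N5 bracket_e_simps)
  moreover have "vadd (bracket N5 (e X4) w) (vscale (w X3) (e Y1)) \<in> K"
    using K br y1 by (simp add: csubspace_vadd csubspace_vscale)
  ultimately have "e Y2 \<in> K"
    using csubspace_vscale_cancel[OF K] \<open>w X5 \<noteq> 0\<close> by metis
  with y1 show ?thesis ..
qed

lemma indecomposable_N1: "indecomposable N1"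
proof (rule indecomposable_if_summand_contains_y)
  show "in_span_y (bracket N1 u v)" for u v
    by (simp add: bracket_in_span_y_N)
  show "in_span_y z" if "\<And>m. bracket N1 (e m) z = vzero" for z
    by (rule center_N[of N1]) (simp_all add: that)
next
  fix I J
  assume I: "lie_ideal N1 I" and J: "lie_ideal N1 J"
    and decomposition: "\<forall>v. \<exists>i\<in>I. \<exists>j\<in>J. v = vadd i j"
  have y1: "e Y1 \<in> I \<or> e Y1 \<in> J"
    using decomposition_coordinate_nonzero[OF decomposition, of X1]
      lie_ideal_N1_contains(1)[OF I] lie_ideal_N1_contains(1)[OF J] by blast
  have y2: "e Y2 \<in> I \<or> e Y2 \<in> J"
    using decomposition_coordinate_nonzero[OF decomposition, of X3]
      lie_ideal_N1_contains(2)[OF I] lie_ideal_N1_contains(2)[OF J] by blast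
  have y1_y2: "vadd (e Y1) (e Y2) \<in> I \<or> vadd (e Y1) (e Y2) \<in> J"
    using decomposition_coordinate_nonzero[OF decomposition, of X5]
      lie_ideal_N1_contains(3)[OF I] lie_ideal_N1_contains(3)[OF J] by blast
  have two_of_three: "e Y1 \<in> K \<and> e Y2 \<in> K"
    if "csubspace K" "vadd (e Y1) (e Y2) \<in> K" "e Y1 \<in> K \<or> e Y2 \<in> K" for K
    using that csubspace_vadd_cancel vadd_commute by metis
  show "e Y1 \<in> I \<and> e Y2 \<in> I \<or> e Y1 \<in> J \<and> e Y2 \<in> J"
    using I J y1 y2 y1_y2 two_of_three by (auto simp: lie_ideal_def)
qed

lemma indecomposable_N2_to_N5:
  assumes N: "sc \<in> {N2, N3, N4, N5}" shows "indecomposable sc"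
proof (rule indecomposable_if_coordinate_forces_y[where m = X5])
  show "in_span_y (bracket sc u v)" for u v
    using N by (auto intro: bracket_in_span_y_N)
  show "in_span_y z" if "\<And>m. bracket sc (e m) z = vzero" for z
    by (rule center_N[of sc]) (use N that in auto)
  show "e Y1 \<in> K \<and> e Y2 \<in> K" if "lie_ideal sc K" "w \<in> K" "w X5 \<noteq> 0" for K w
    using N that lie_ideal_N2_contains_y lie_ideal_N3_contains_y
      lie_ideal_N4_contains_y lie_ideal_N5_contains_y by blast
qed

theorem theorem5:
  shows "\<forall>sc\<in>{N1, N2, N3, N4, N5}. is_lie_algebra sc \<and> indecomposable sc"
  using is_lie_algebra_N indecomposable_N1 indecomposable_N2_to_N5 by blast

end
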